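(* Let $R$ be an integral domain, $Q$ a prime ideal of $R[X]$, and $p = Q\cap R$. If $p^t$ is $p$-primary (equivalently $p^t = p^{(t)} = p^tR_p\cap R$) for all $t\geq 1$, then $Q$ is power stable.
   Context: An ideal $I$ of the polynomial ring $R[X]$ over an integral domain $R$ is called power stable if $I^t\cap R = (I\cap R)^t$ for all integers $t\geq 1$. *)

theory Defs
  imports "HOL-Computational_Algebra.Polynomial"
begin

definition is_ideal :: "'a::comm_ring_1 set \<Rightarrow> bool" where
  "is_ideal I \<longleftrightarrow> 0 \<in> I \<and> (\<forall>a\<in>I. \<forall>b\<in>I. a + b \<in> I) \<and> (\<forall>r a. a \<in> I \<longrightarrow> r * a \<in> I)"

definition prime_ideal :: "'a::comm_ring_1 set \<Rightarrow> bool" where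
  "prime_ideal P \<longleftrightarrow> is_ideal P \<and> P \<noteq> UNIV \<and> (\<forall>a b. a * b \<in> P \<longrightarrow> a \<in> P \<or> b \<in> P)"

definition ideal_gen :: "'a::comm_ring_1 set \<Rightarrow> 'a set" where
  "ideal_gen S = \<Inter>{J. is_ideal J \<and> S \<subseteq> J}"

definition ideal_prod :: "'a::comm_ring_1 set \<Rightarrow> 'a set \<Rightarrow> 'a set" where
  "ideal_prod I J = ideal_gen {i * j | i j. i \<in> I \<and> j \<in> J}"

primrec ideal_pow :: "'a::comm_ring_1 set \<Rightarrow> nat \<Rightarrow> 'a set" where
  "ideal_pow I 0 = UNIV"
| "ideal_pow I (Suc n) = ideal_prod I (ideal_pow I n)"

definition radical :: "'a::comm_ring_1 set \<Rightarrow> 'a set" where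
  "radical I = {a. \<exists>n. a ^ n \<in> I}"

definition primary_ideal :: "'a::comm_ring_1 set \<Rightarrow> bool" where
  "primary_ideal q \<longleftrightarrow> is_ideal q \<and> q \<noteq> UNIV \<and>
     (\<forall>a b. a * b \<in> q \<longrightarrow> a \<in> q \<or> b \<in> radical q)"

definition primary_for :: "'a::comm_ring_1 set \<Rightarrow> 'a set \<Rightarrow> bool" where
  "primary_for q P \<longleftrightarrow> primary_ideal q \<and> radical q = P"

text \<open>Contraction \<open>I \<inter> R\<close> of an ideal of \<open>R[X]\<close> to \<open>R\<close> (constants).\<close>
definition contract :: "'a::comm_ring_1 poly set \<Rightarrow> 'a set" where
  "contract I = {a. [:a:] \<in> I}"

definition power_stable :: "'a::comm_ring_1 poly set \<Rightarrow> bool" where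
  "power_stable I \<longleftrightarrow> (\<forall>t::nat. t \<ge> 1 \<longrightarrow> contract (ideal_pow I t) = ideal_pow (contract I) t)"

end

theory Submission
  imports Defs
begin

(* Let p = Q \<inter> R.  The inclusion p^t \<subseteq> Q^t \<inter> R always holds; the
   content is the reverse inclusion.  The idea is to find an element s \<notin> p and
   a polynomial f (either f = 0, or deg f \<ge> 1 with leading coefficient s) such
   that every q \<in> Q satisfies s^k q \<equiv> g (mod f) for some g \<in> p[X]; in other
   words Q lies in the ideal  sat_ext p s f.  These ideals multiply like the
   powers of p, so Q^t \<subseteq> sat_ext (p^t) s f.  For a constant a \<in> Q^t, dividing
   by f (whose leading coefficient is s) shows s^m a \<in> p^t, and since p^t is
   p-primary and s \<notin> p this gives a \<in> p^t.  The divisor f is a polynomial of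
   least degree in Q having a coefficient outside p (if there is none, Q \<subseteq> p[X]
   and f = 0, s = 1 do). *)

lemma ideal_0: "is_ideal I \<Longrightarrow> 0 \<in> I"
  by (simp add: is_ideal_def)

lemma ideal_add: "is_ideal I \<Longrightarrow> a \<in> I \<Longrightarrow> b \<in> I \<Longrightarrow> a + b \<in> I"
  by (simp add: is_ideal_def)

lemma ideal_mult: "is_ideal I \<Longrightarrow> a \<in> I \<Longrightarrow> r * a \<in> I"
  by (simp add: is_ideal_def)

lemma ideal_mult_right: "is_ideal I \<Longrightarrow> a \<in> I \<Longrightarrow> a * r \<in> I"
  using ideal_mult[of I a r] by (simp add: mult.commute)

lemma ideal_diff: "is_ideal I \<Longrightarrow> a \<in> I \<Longrightarrow> b \<in> I \<Longrightarrow> a - b \<in> I"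
  using ideal_add[of I a "(-1) * b"] ideal_mult[of I b "-1"] by simp

lemma ideal_sum:
  assumes "is_ideal I" "finite A" "\<And>x. x \<in> A \<Longrightarrow> f x \<in> I"
  shows "sum f A \<in> I"
  using assms(2,3)
  by (induction A rule: finite_induct) (simp_all add: ideal_0 ideal_add assms(1))

lemma ideal_one_UNIV: "is_ideal I \<Longrightarrow> 1 \<in> I \<Longrightarrow> I = UNIV"
  using ideal_mult[of I 1] by auto

lemma ideal_gen_ideal: "is_ideal (ideal_gen S)"
proof -
  have "0 \<in> ideal_gen S"
    unfolding ideal_gen_def using ideal_0 by blast
  moreover have "x + y \<in> ideal_gen S" if "x \<in> ideal_gen S" "y \<in> ideal_gen S" for x y
    using that ideal_add unfolding ideal_gen_def by blast
  moreover have "r * x \<in> ideal_gen S" if "x \<in> ideal_gen S" for r x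
    using that ideal_mult unfolding ideal_gen_def by blast
  ultimately show ?thesis unfolding is_ideal_def by blast
qed

lemma ideal_gen_sup: "S \<subseteq> ideal_gen S"
  unfolding ideal_gen_def by auto

lemma ideal_gen_least: "is_ideal J \<Longrightarrow> S \<subseteq> J \<Longrightarrow> ideal_gen S \<subseteq> J"
  unfolding ideal_gen_def by auto

lemma ideal_prod_mem: "i \<in> I \<Longrightarrow> j \<in> J \<Longrightarrow> i * j \<in> ideal_prod I J"
  unfolding ideal_prod_def by (rule subsetD[OF ideal_gen_sup]) blast

lemma ideal_pow_ideal: "is_ideal (ideal_pow I t)"
  by (cases t) (simp add: is_ideal_def, simp add: ideal_prod_def ideal_gen_ideal)

lemma ideal_pow_le:
  assumes "K 0 = UNIV" "\<And>t. is_ideal (K t)"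
    and "\<And>t i j. i \<in> J \<Longrightarrow> j \<in> K t \<Longrightarrow> i * j \<in> K (Suc t)"
  shows "ideal_pow J t \<subseteq> K t"
proof (induction t)
  case (Suc t)
  show ?case unfolding ideal_pow.simps ideal_prod_def
    by (rule ideal_gen_least[OF assms(2)]) (use Suc assms(3) in blast)
qed (simp add: assms(1))

section \<open>Contraction to the constants\<close>

lemma contract_ideal:
  assumes I: "is_ideal I" shows "is_ideal (contract I)"
proof -
  have "[:a + b:] \<in> I" if "[:a:] \<in> I" "[:b:] \<in> I" for a b
    using ideal_add[OF I that] by simp
  moreover have "[:r * a:] \<in> I" if "[:a:] \<in> I" for r a
    using ideal_mult[OF I that, of "[:r:]"] by (simp add: mult.commute)
  ultimately show ?thesis
    unfolding is_ideal_def contract_def using ideal_0[OF I] by simp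
qed

lemma contract_pow_sup: "ideal_pow (contract Q) t \<subseteq> contract (ideal_pow Q t)"
proof (rule ideal_pow_le)
  show "is_ideal (contract (ideal_pow Q t))" for t
    by (rule contract_ideal[OF ideal_pow_ideal])
  show "i * j \<in> contract (ideal_pow Q (Suc t))"
    if "i \<in> contract Q" "j \<in> contract (ideal_pow Q t)" for i j t
    using ideal_prod_mem[of "[:i:]" Q "[:j:]" "ideal_pow Q t"] that
    by (simp add: contract_def mult.commute)
qed (simp add: contract_def)

lemma poly_in_ideal_if_coeffs:
  assumes Q: "is_ideal Q" and h: "\<forall>n. coeff h n \<in> contract Q"
  shows "h \<in> Q"
  using h
proof (induction h rule: pCons_induct)
  case 0 then show ?case by (simp add: ideal_0[OF Q])
next
  case (pCons a h)
  have "h \<in> Q" using pCons.IH pCons.prems[rule_format, of "Suc _"] by simp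
  moreover have "[:a:] \<in> Q" using pCons.prems[rule_format, of 0] by (simp add: contract_def)
  ultimately have "[:a:] + [:0, 1:] * h \<in> Q" using ideal_add[OF Q] ideal_mult[OF Q] by blast
  then show ?case by simp
qed

section \<open>The extension \<open>I[X]\<close> of an ideal\<close>

definition poly_ext :: "'a::comm_ring_1 set \<Rightarrow> 'a poly set" where
  "poly_ext I = {g. \<forall>n. coeff g n \<in> I}"

lemma poly_ext_ideal:
  assumes I: "is_ideal I" shows "is_ideal (poly_ext I)"
proof -
  have "coeff (r * g) n \<in> I" if "g \<in> poly_ext I" for r g n
    unfolding coeff_mult
    by (rule ideal_sum[OF I]) (use that ideal_mult[OF I] in \<open>simp_all add: poly_ext_def\<close>)
  then show ?thesis
    unfolding is_ideal_def using ideal_0[OF I] ideal_add[OF I] by (simp add: poly_ext_def)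
qed

lemma poly_ext_mult:
  assumes g: "g \<in> poly_ext I" and h: "h \<in> poly_ext J"
  shows "g * h \<in> poly_ext (ideal_prod I J)"
proof -
  have "coeff (g * h) n \<in> ideal_prod I J" for n
    unfolding coeff_mult ideal_prod_def
  proof (rule ideal_sum[OF ideal_gen_ideal])
    fix i assume "i \<in> {..n}"
    show "coeff g i * coeff h (n - i) \<in> ideal_gen {i * j |i j. i \<in> I \<and> j \<in> J}"
      using ideal_prod_mem[of "coeff g i" I "coeff h (n - i)" J] g h
      by (simp add: poly_ext_def ideal_prod_def)
  qed simp
  then show ?thesis by (simp add: poly_ext_def)
qed

lemma poly_ext_UNIV: "poly_ext UNIV = UNIV"
  by (simp add: poly_ext_def)

section \<open>Pseudo-division inside an ideal\<close>

text \<open>Division by \<open>f\<close> after multiplying by a power of its leading coefficient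
  stays inside an ideal \<open>Z\<close> of \<open>R[X]\<close>, provided \<open>Z\<close> contains the monomial multiples
  of \<open>f\<close> used to cancel leading terms.\<close>
lemma pseudo_divide_in_ideal:
  fixes f g :: "'a::idom poly"
  assumes Z: "is_ideal Z" and g: "g \<in> Z" and d: "degree f \<ge> 1"
    and cancel: "\<And>h k. h \<in> Z \<Longrightarrow> monom (lead_coeff h) k * f \<in> Z"
  shows "\<exists>e u r. smult (lead_coeff f ^ e) g = f * u + r \<and> r \<in> Z \<and> degree r < degree f"
  using g
proof (induction "degree g" arbitrary: g rule: less_induct)
  case less
  show ?case
  proof (cases "degree g < degree f")
    case True
    then show ?thesis using less by (intro exI[of _ 0] exI[of _ 0] exI[of _ g]) auto
  next
    case False
    define s where "s = lead_coeff f"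
    define m where "m = monom (lead_coeff g) (degree g - degree f)"
    define g' where "g' = smult s g - m * f"
    have g'Z: "g' \<in> Z" unfolding g'_def m_def
      using ideal_diff[OF Z ideal_mult[OF Z less(2), of "[:s:]"] cancel[OF less(2)]] by simp
    have "degree (m * f) \<le> degree g"
      using degree_mult_le[of m f] degree_monom_le[of "lead_coeff g" "degree g - degree f"] False
      unfolding m_def by linarith
    then have "degree g' \<le> degree g"
      unfolding g'_def using degree_diff_le[of "smult s g"] by simp
    moreover have "coeff g' (degree g) = 0"
      using False unfolding g'_def m_def s_def by (simp add: coeff_monom_mult)
    moreover have "degree g > 0" using False d by linarith
    ultimately have "degree g' < degree g"
      by (metis leading_coeff_0_iff le_neq_implies_less degree_0)
    then obtain e u r where IH: "smult (s ^ e) g' = f * u + r" "r \<in> Z" "degree r < degree f"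
      using less(1)[OF _ g'Z] unfolding s_def by blast
    have "smult (s ^ Suc e) g = smult (s ^ e) (g' + m * f)"
      unfolding g'_def by (simp add: mult.commute)
    also have "\<dots> = f * (u + smult (s ^ e) m) + r"
      unfolding smult_add_right IH(1) by (simp add: algebra_simps)
    finally show ?thesis using IH unfolding s_def by blast
  qed
qed

section \<open>The ideals \<open>sat_ext I s f\<close>\<close>

definition sat_ext :: "'a::comm_ring_1 set \<Rightarrow> 'a \<Rightarrow> 'a poly \<Rightarrow> 'a poly set" where
  "sat_ext I s f = {h. \<exists>k g w. smult (s ^ k) h = g + f * w \<and> g \<in> poly_ext I}"

lemma sat_ext_ideal:
  assumes I: "is_ideal I" shows "is_ideal (sat_ext I s f)"
  unfolding is_ideal_def
proof (intro conjI ballI allI impI)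
  have "smult (s ^ 0) 0 = 0 + f * 0" by simp
  then show "0 \<in> sat_ext I s f"
    unfolding sat_ext_def using ideal_0[OF poly_ext_ideal[OF I]] by blast
next
  have E: "is_ideal (poly_ext I)" by (rule poly_ext_ideal[OF I])
  fix a b assume "a \<in> sat_ext I s f" "b \<in> sat_ext I s f"
  then obtain k1 g1 w1 k2 g2 w2 where
    1: "smult (s ^ k1) a = g1 + f * w1" "g1 \<in> poly_ext I" and
    2: "smult (s ^ k2) b = g2 + f * w2" "g2 \<in> poly_ext I"
    unfolding sat_ext_def by blast
  have "smult (s ^ (k1 + k2)) (a + b)
      = smult (s ^ k2) (smult (s ^ k1) a) + smult (s ^ k1) (smult (s ^ k2) b)"
    by (simp add: power_add smult_add_right mult.commute)
  also have "\<dots> = ([:s ^ k2:] * g1 + [:s ^ k1:] * g2) + f * (smult (s ^ k2) w1 + smult (s ^ k1) w2)"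
    unfolding 1 2 by (simp add: algebra_simps smult_add_right)
  finally show "a + b \<in> sat_ext I s f"
    unfolding sat_ext_def using 1(2) 2(2) ideal_add[OF E] ideal_mult[OF E] by blast
next
  fix r a assume "a \<in> sat_ext I s f"
  then obtain k g w where 1: "smult (s ^ k) a = g + f * w" "g \<in> poly_ext I"
    unfolding sat_ext_def by blast
  have "smult (s ^ k) (r * a) = r * g + f * (r * w)"
    by (metis 1(1) mult_smult_right distrib_left mult.left_commute)
  then show "r * a \<in> sat_ext I s f"
    unfolding sat_ext_def using ideal_mult[OF poly_ext_ideal[OF I] 1(2)] by blast
qed

lemma sat_ext_mult:
  assumes h: "h \<in> sat_ext I s f" and h': "h' \<in> sat_ext J s f"
  shows "h * h' \<in> sat_ext (ideal_prod I J) s f"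
proof -
  obtain k1 g1 w1 k2 g2 w2 where
    1: "smult (s ^ k1) h = g1 + f * w1" "g1 \<in> poly_ext I" and
    2: "smult (s ^ k2) h' = g2 + f * w2" "g2 \<in> poly_ext J"
    using h h' unfolding sat_ext_def by blast
  have "smult (s ^ (k1 + k2)) (h * h') = smult (s ^ k1) h * smult (s ^ k2) h'"
    by (simp add: power_add mult_smult_left mult_smult_right mult.commute)
  also have "\<dots> = g1 * g2 + f * (w1 * g2 + g1 * w2 + f * w1 * w2)"
    unfolding 1 2 by (simp add: algebra_simps)
  finally show ?thesis
    unfolding sat_ext_def using poly_ext_mult[OF 1(2) 2(2)] by blast
qed

lemma sat_ext_pow:
  assumes I: "is_ideal I" and Q: "Q \<subseteq> sat_ext I s f"
  shows "ideal_pow Q t \<subseteq> sat_ext (ideal_pow I t) s f"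
proof (rule ideal_pow_le)
  have "h \<in> sat_ext UNIV s f" for h
    unfolding sat_ext_def poly_ext_UNIV by (intro CollectI exI[of _ 0] exI[of _ h]) simp
  then show "sat_ext (ideal_pow I 0) s f = UNIV" by auto
  show "is_ideal (sat_ext (ideal_pow I t) s f)" for t
    by (rule sat_ext_ideal[OF ideal_pow_ideal])
  show "i * j \<in> sat_ext (ideal_pow I (Suc t)) s f"
    if "i \<in> Q" "j \<in> sat_ext (ideal_pow I t) s f" for t i j
    using sat_ext_mult[of i I s f j "ideal_pow I t"] that Q by auto
qed

text \<open>If a constant \<open>a\<close> lies in \<open>sat_ext I s f\<close>, where \<open>f\<close> is zero or a non-constant
  polynomial with leading coefficient \<open>s\<close>, then \<open>s\<^sup>m a \<in> I\<close> for some \<open>m\<close>: reducing the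
  witness modulo \<open>f\<close> leaves a polynomial of degree \<open>< deg f\<close> divisible by \<open>f\<close>.\<close>
lemma constant_in_sat_ext:
  fixes f :: "'a::idom poly"
  assumes I: "is_ideal I" and a: "[:a:] \<in> sat_ext I s f"
    and f: "f = 0 \<or> (degree f \<ge> 1 \<and> lead_coeff f = s)"
  shows "\<exists>m. s ^ m * a \<in> I"
proof -
  obtain k g w where kg: "smult (s ^ k) [:a:] = g + f * w" "g \<in> poly_ext I"
    using a unfolding sat_ext_def by blast
  show ?thesis
  proof (cases "f = 0")
    case True
    then have "g = [:s ^ k * a:]" using kg(1) by simp
    moreover have "coeff g 0 \<in> I" using kg(2) by (simp add: poly_ext_def)
    ultimately show ?thesis by auto
  next
    case False
    with f have d: "degree f \<ge> 1" and s: "lead_coeff f = s" by auto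
    have cancel: "monom (lead_coeff h) j * f \<in> poly_ext I" if "h \<in> poly_ext I" for h j
      using that ideal_0[OF I] ideal_mult_right[OF I]
      by (simp add: poly_ext_def coeff_monom_mult)
    obtain e u r where r: "smult (s ^ e) g = f * u + r" "r \<in> poly_ext I" "degree r < degree f"
      using pseudo_divide_in_ideal[OF poly_ext_ideal[OF I] kg(2) d cancel] s by blast
    have eq: "[:s ^ (e + k) * a:] - r = f * (u + smult (s ^ e) w)"
    proof -
      have "[:s ^ (e + k) * a:] = smult (s ^ e) (smult (s ^ k) [:a:])" by (simp add: power_add)
      also have "\<dots> = f * u + r + f * smult (s ^ e) w"
        unfolding kg(1) smult_add_right r(1) by simp
      finally show ?thesis by (simp add: algebra_simps)
    qed
    have "degree ([:s ^ (e + k) * a:] - r) < degree f"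
      using degree_diff_le[of "[:s ^ (e + k) * a:]" "degree r" r] r(3) d by simp
    then have "u + smult (s ^ e) w = 0"
      using eq False by (metis degree_mult_eq mult_eq_0_iff le_add1 leD)
    then have "r = [:s ^ (e + k) * a:]" using eq by simp
    moreover have "coeff r 0 \<in> I" using r(2) by (simp add: poly_ext_def)
    ultimately show ?thesis by auto
  qed
qed

section \<open>A divisor of minimal degree\<close>

text \<open>A polynomial of least degree in \<open>Q\<close> having a coefficient outside \<open>p = Q \<inter> R\<close>
  is non-constant and its leading coefficient lies outside \<open>p\<close>: otherwise removing
  the leading monomial (which lies in \<open>Q\<close>) would give such a polynomial of smaller
  degree.\<close>
lemma minimal_polynomial_outside_ext:
  fixes Q :: "'a::idom poly set"
  defines "p \<equiv> contract Q"
  assumes Q: "is_ideal Q" and fQ: "f \<in> Q" and f_out: "f \<notin> poly_ext p"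
    and fmin: "\<And>h. h \<in> Q \<Longrightarrow> degree h < degree f \<Longrightarrow> h \<in> poly_ext p"
  shows "degree f \<ge> 1" and "lead_coeff f \<notin> p"
proof -
  have p0: "0 \<in> p" unfolding p_def by (rule ideal_0[OF contract_ideal[OF Q]])
  show d: "degree f \<ge> 1"
  proof (rule ccontr)
    assume "\<not> degree f \<ge> 1"
    then have deg0: "degree f = 0" by simp
    have "[:coeff f 0:] \<in> Q" using fQ by (simp only: degree_0_id[OF deg0])
    then have "coeff f 0 \<in> p" by (simp add: p_def contract_def)
    then have "coeff f n \<in> p" for n
      using deg0 p0 by (cases n) (simp_all add: coeff_eq_0)
    then show False using f_out by (simp add: poly_ext_def)
  qed
  show "lead_coeff f \<notin> p"
  proof
    define s where "s = lead_coeff f"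
    assume "lead_coeff f \<in> p"
    then have sp: "s \<in> p" by (simp add: s_def)
    define f' where "f' = f - monom s (degree f)"
    have "monom s (degree f) \<in> Q"
      by (rule poly_in_ideal_if_coeffs[OF Q]) (use sp p0 in \<open>auto simp: p_def coeff_monom\<close>)
    then have "f' \<in> Q" unfolding f'_def using ideal_diff[OF Q fQ] by blast
    moreover have "f' \<notin> poly_ext p"
    proof -
      obtain n where n: "coeff f n \<notin> p" using f_out unfolding poly_ext_def by blast
      then have "n \<noteq> degree f" using sp s_def by auto
      then have "coeff f' n \<notin> p" using n by (simp add: f'_def coeff_monom)
      then show ?thesis by (auto simp: poly_ext_def)
    qed
    moreover have "degree f' < degree f"
    proof -
      have "degree f' \<le> degree f" unfolding f'_def
        by (rule degree_diff_le) (auto simp: degree_monom_le)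
      moreover have "coeff f' (degree f) = 0" by (simp add: f'_def s_def)
      ultimately show ?thesis
        using d by (metis leading_coeff_0_iff le_neq_implies_less degree_0 not_one_le_zero)
    qed
    ultimately show False using fmin by blast
  qed
qed

lemma exists_divisor:
  fixes Q :: "'a::idom poly set"
  assumes Q: "is_ideal Q" "Q \<noteq> UNIV"
  obtains s f where "s \<notin> contract Q" "Q \<subseteq> sat_ext (contract Q) s f"
    "f = 0 \<or> (degree f \<ge> 1 \<and> lead_coeff f = s)"
proof (cases "Q \<subseteq> poly_ext (contract Q)")
  case True
  have "1 \<notin> contract Q"
  proof
    assume "1 \<in> contract Q"
    then have "1 \<in> Q" by (simp add: contract_def flip: one_pCons)
    then show False using Q ideal_one_UNIV by blast
  qed
  moreover have "Q \<subseteq> sat_ext (contract Q) 1 0"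
  proof
    fix q assume "q \<in> Q"
    moreover have "smult (1 ^ 0) q = q + 0 * 0" by simp
    ultimately show "q \<in> sat_ext (contract Q) 1 0"
      using True unfolding sat_ext_def by blast
  qed
  ultimately show ?thesis using that by blast
next
  case False
  define p where "p = contract Q"
  define M where "M = Q - poly_ext p"
  obtain f where fM: "f \<in> M" and fmin: "\<And>h. h \<in> M \<Longrightarrow> degree f \<le> degree h"
    using False ex_has_least_nat[of "\<lambda>q. q \<in> M" _ degree] unfolding M_def p_def by blast
  have fQ: "f \<in> Q" and f_out: "f \<notin> poly_ext p" using fM M_def by auto
  have small: "r \<in> poly_ext p" if "r \<in> Q" "degree r < degree f" for r
    using fmin[of r] that unfolding M_def by (meson DiffI not_le)
  define s where "s = lead_coeff f"
  have d: "degree f \<ge> 1" and sp: "s \<notin> p"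
    using minimal_polynomial_outside_ext[OF Q(1) fQ f_out[unfolded p_def] small[unfolded p_def]]
    unfolding p_def s_def by auto
  text \<open>Pseudo-division by \<open>f\<close> inside \<open>Q\<close> leaves remainders in \<open>p[X]\<close>.\<close>
  have "Q \<subseteq> sat_ext p s f"
  proof
    fix q assume q: "q \<in> Q"
    obtain e u r where r: "smult (s ^ e) q = f * u + r" "r \<in> Q" "degree r < degree f"
      using pseudo_divide_in_ideal[OF Q(1) q d] ideal_mult[OF Q(1) fQ] s_def by blast
    then have "smult (s ^ e) q = r + f * u" by (simp add: add.commute)
    then show "q \<in> sat_ext p s f" unfolding sat_ext_def using small[OF r(2,3)] by blast
  qed
  then show ?thesis using that sp d unfolding p_def s_def by blast
qed

section \<open>Power stability\<close>

lemma primary_cancel: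
  assumes q: "primary_for q P" and s: "s \<notin> P" and sa: "s ^ m * a \<in> q"
  shows "a \<in> q"
proof -
  have "a * s ^ m \<in> q" using sa by (simp add: mult.commute)
  then have "a \<in> q \<or> s ^ m \<in> radical q"
    using q unfolding primary_for_def primary_ideal_def by blast
  moreover have "s ^ m \<notin> radical q"
  proof
    assume "s ^ m \<in> radical q"
    then obtain n where n: "s ^ (m * n) \<in> q" by (auto simp: radical_def power_mult)
    have "m * n \<noteq> 0"
    proof
      assume "m * n = 0"
      then have "1 \<in> q" using n by (metis power_0)
      then show False
        using q ideal_one_UNIV[of q] unfolding primary_for_def primary_ideal_def by blast
    qed
    then have "s \<in> radical q" using n by (auto simp: radical_def)
    then show False using q s by (simp add: primary_for_def)
  qed
  ultimately show ?thesis by blast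
qed

text \<open>The theorem holds for every proper ideal \<open>Q\<close>, not only for prime ones.\<close>
theorem power_stable_if_contraction_powers_primary:
  fixes Q :: "'a::idom poly set"
  assumes Q: "is_ideal Q" "Q \<noteq> UNIV"
    and primary: "\<And>t. t \<ge> 1 \<Longrightarrow> primary_for (ideal_pow (contract Q) t) (contract Q)"
  shows "power_stable Q"
  unfolding power_stable_def
proof (intro allI impI equalityI)
  fix t :: nat assume t: "t \<ge> 1"
  let ?p = "contract Q"
  obtain s f where s: "s \<notin> ?p" and Qf: "Q \<subseteq> sat_ext ?p s f"
    and f: "f = 0 \<or> (degree f \<ge> 1 \<and> lead_coeff f = s)"
    using exists_divisor[OF Q] by blast
  have pI: "is_ideal ?p" by (rule contract_ideal[OF Q(1)])
  show "contract (ideal_pow Q t) \<subseteq> ideal_pow ?p t"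
  proof
    fix a assume "a \<in> contract (ideal_pow Q t)"
    then have "[:a:] \<in> sat_ext (ideal_pow ?p t) s f"
      using sat_ext_pow[OF pI Qf] by (auto simp: contract_def)
    then obtain m where "s ^ m * a \<in> ideal_pow ?p t"
      using constant_in_sat_ext[OF ideal_pow_ideal _ f] by blast
    then show "a \<in> ideal_pow ?p t" by (rule primary_cancel[OF primary[OF t] s])
  qed
qed (rule contract_pow_sup)

theorem mainTheorem13:
  fixes Q :: "'a::idom poly set"
  assumes "prime_ideal Q"
    and "\<forall>t::nat. t \<ge> 1 \<longrightarrow> primary_for (ideal_pow (contract Q) t) (contract Q)"
  shows "power_stable Q"
  using assms by (intro power_stable_if_contraction_powers_primary) (auto simp: prime_ideal_def)

end
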